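(* Let $\Delta\subset TM$ be a regular, completely non-holonomic distribution on a smooth manifold $M$, let $x\in M$, and let $\kappa$ be the least integer with $\Delta_\kappa=TM$. Let $\{Z_{jl}\}$ ($1\le j\le\kappa$) be a local frame of $TM$ near $x$ compatible with the weak derived flag. Let $X\in\mathcal{L}(x)^i$ for some $i\ge0$, and write $X=\sum_{j,l}f_{jl}Z_{jl}$. Then $f_{jl}\in\mu_{\Delta,x}^{i+j}$ for all $1\le j\le\kappa$ and all $l$.
   Context: Weak derived flag: $\Delta_1=\Delta$, $\Gamma(\Delta_{i+1})=[\Gamma(\Delta),\Gamma(\Delta_i)]$, and $\Delta_s=0$ for $s\le0$. Regular means that all $\Delta_s$ have constant rank. A frame $\{Z_{jl}\}$ is compatible with the weak derived flag if each $Z_{jl}$ is a section of $\Delta_j$ and, for every $s$, the fields $\{Z_{tl}:t\le s\}$ form a local frame of $\Delta_s$ near $x$. $\mathcal{L}(x)$ is the Lie algebra of germs at $x$ of vector fields $X$ with $[X,\Gamma(\Delta)]\subset\Gamma(\Delta)$. Its filtration is defined as follows. - For $i<0$: $\mathcal{L}(x)^i=\{X: X_x\in(\Delta_{-i})_x\}$. - $\mathcal{L}(x)^0=\{X:X_x=0\}$. - For $i\ge0$: $\mathcal{L}(x)^{i+1}=\{X\in\mathcal{L}(x)^i: [[\cdots[X,Y_1],Y_2],\dots],Y_{i+1}]_x=0$ for all $Y_1,\dots,Y_{i+1}\in\Gamma(\Delta)\}$. A function $f$ belongs to $\mu_{\Delta,x}^{k+1}$ if $(Y_1\cdots Y_t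 f)(x)=0$ for all $Y_1,\dots,Y_t\in\Gamma(\Delta)$ and all $0\le t\le k$. For $t=0$ this is the condition $f(x)=0$. *)

theory Defs
  imports "HOL-Analysis.Analysis"
begin

(* Local (chart) model: the manifold M is an open set U of a euclidean space 'a;
   tangent vectors / vector fields are 'a-valued. *)

fun pderiv_iter :: "'a::real_normed_vector list \<Rightarrow> ('a \<Rightarrow> 'b::real_normed_vector) \<Rightarrow> 'a \<Rightarrow> 'b" where
  "pderiv_iter [] f = f"
| "pderiv_iter (v # vs) f = (\<lambda>y. frechet_derivative (pderiv_iter vs f) (at y) v)"

definition smooth_on :: "'a::real_normed_vector set \<Rightarrow> ('a \<Rightarrow> 'b::real_normed_vector) \<Rightarrow> bool" where
  "smooth_on V f \<longleftrightarrow> (\<forall>vs. \<forall>y\<in>V. pderiv_iter vs f differentiable (at y))"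

definition lie_deriv :: "('a::real_normed_vector \<Rightarrow> 'a) \<Rightarrow> ('a \<Rightarrow> real) \<Rightarrow> 'a \<Rightarrow> real" where
  "lie_deriv Y f = (\<lambda>y. frechet_derivative f (at y) (Y y))"

(* Lie bracket [X,Y], with [X,Y]f = X(Yf) - Y(Xf) *)
definition lie_bracket :: "('a::real_normed_vector \<Rightarrow> 'a) \<Rightarrow> ('a \<Rightarrow> 'a) \<Rightarrow> 'a \<Rightarrow> 'a" where
  "lie_bracket X Y = (\<lambda>y. frechet_derivative Y (at y) (X y) - frechet_derivative X (at y) (Y y))"

definition section_on :: "'a::euclidean_space set \<Rightarrow> ('a \<Rightarrow> 'a set) \<Rightarrow> 'a set \<Rightarrow> ('a \<Rightarrow> 'a) \<Rightarrow> bool" where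
  "section_on U E V Y \<longleftrightarrow> open V \<and> V \<subseteq> U \<and> smooth_on V Y \<and> (\<forall>y\<in>V. Y y \<in> E y)"

(* Y represents a germ at x of a section of E, i.e. Y \<in> \<Gamma>(E) near x *)
definition local_section :: "'a::euclidean_space set \<Rightarrow> ('a \<Rightarrow> 'a set) \<Rightarrow> 'a \<Rightarrow> ('a \<Rightarrow> 'a) \<Rightarrow> bool" where
  "local_section U E x Y \<longleftrightarrow> (\<exists>V. x \<in> V \<and> section_on U E V Y)"

definition smooth_distribution :: "'a::euclidean_space set \<Rightarrow> ('a \<Rightarrow> 'a set) \<Rightarrow> bool" where
  "smooth_distribution U D \<longleftrightarrow> open U \<and> (\<forall>y\<in>U. subspace (D y)) \<and>
     (\<forall>y\<in>U. \<exists>V Ys. open V \<and> y \<in> V \<and> V \<subseteq> U \<and> finite Ys \<and> (\<forall>Y\<in>Ys. smooth_on V Y) \<and>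
        (\<forall>z\<in>V. span ((\<lambda>Y. Y z) ` Ys) = D z))"

(* weak derived flag, pointwise: \<Delta>_0 = 0, \<Delta>_1 = \<Delta>,
   (\<Delta>_{s+1})_y = span of (\<Delta>_s)_y and the values at y of brackets [Y,Z],
   Y \<in> \<Gamma>(\<Delta>), Z \<in> \<Gamma>(\<Delta>_s) near y *)
fun flag :: "'a::euclidean_space set \<Rightarrow> ('a \<Rightarrow> 'a set) \<Rightarrow> nat \<Rightarrow> 'a \<Rightarrow> 'a set" where
  "flag U D 0 = (\<lambda>y. {0})"
| "flag U D (Suc 0) = D"
| "flag U D (Suc (Suc s)) = (\<lambda>y. span (flag U D (Suc s) y \<union>
      {lie_bracket Y Z y | Y Z. \<exists>V. y \<in> V \<and> section_on U D V Y \<and> section_on U (flag U D (Suc s)) V Z}))"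

definition regular :: "'a::euclidean_space set \<Rightarrow> ('a \<Rightarrow> 'a set) \<Rightarrow> bool" where
  "regular U D \<longleftrightarrow> (\<forall>s\<ge>1. \<exists>r. \<forall>y\<in>U. dim (flag U D s y) = r)"

(* the germs at x of vector fields X with [X, \<Gamma>(\<Delta>)] \<subseteq> \<Gamma>(\<Delta>) *)
definition Lx :: "'a::euclidean_space set \<Rightarrow> ('a \<Rightarrow> 'a set) \<Rightarrow> 'a \<Rightarrow> ('a \<Rightarrow> 'a) \<Rightarrow> bool" where
  "Lx U D x X \<longleftrightarrow> (\<exists>V. open V \<and> V \<subseteq> U \<and> x \<in> V \<and> smooth_on V X) \<and>
     (\<forall>Y. local_section U D x Y \<longrightarrow> local_section U D x (lie_bracket X Y))"

fun Lfilt :: "'a::euclidean_space set \<Rightarrow> ('a \<Rightarrow> 'a set) \<Rightarrow> 'a \<Rightarrow> nat \<Rightarrow> ('a \<Rightarrow> 'a) \<Rightarrow> bool" where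
  "Lfilt U D x 0 X \<longleftrightarrow> Lx U D x X \<and> X x = 0"
| "Lfilt U D x (Suc i) X \<longleftrightarrow> Lfilt U D x i X \<and>
     (\<forall>Ys. length Ys = Suc i \<and> (\<forall>Y\<in>set Ys. local_section U D x Y) \<longrightarrow>
        foldl lie_bracket X Ys x = 0)"

(* mu U D x m f  means  f \<in> \<mu>_{\<Delta>,x}^m  (m = k+1: (Y_1 ... Y_t f)(x) = 0 for all t \<le> k) *)
definition mu :: "'a::euclidean_space set \<Rightarrow> ('a \<Rightarrow> 'a set) \<Rightarrow> 'a \<Rightarrow> nat \<Rightarrow> ('a \<Rightarrow> real) \<Rightarrow> bool" where
  "mu U D x m f \<longleftrightarrow> (\<exists>V. open V \<and> V \<subseteq> U \<and> x \<in> V \<and> smooth_on V f) \<and>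
     (\<forall>Ys. length Ys < m \<and> (\<forall>Y\<in>set Ys. local_section U D x Y) \<longrightarrow> foldr lie_deriv Ys f x = 0)"

definition frame_idx :: "(nat \<Rightarrow> nat) \<Rightarrow> nat \<Rightarrow> nat \<Rightarrow> (nat \<times> nat) set" where
  "frame_idx r \<kappa> s = {(t, l). 1 \<le> t \<and> t \<le> min s \<kappa> \<and> l < r t}"

end

(*
  Write V = \<Sum> c_a(V) Z_a in the adapted frame, where a = (j, l) has level |a| = j.  Since \<Delta>_j is
  spanned by the Z_a with |a| \<le> j, bracketing a frame field with a section Y of \<Delta> raises the level
  by at most one, and the Leibniz rule gives
    c_b([V, Y]) = \<Sum>_a c_a(V) c_b([Z_a, Y]) - Y c_b(V),   where c_b([Z_a, Y]) = 0 near x if |a| + 1 < |b|.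
  Read in both directions, this identity shows that "c_b(V) \<in> \<mu>^(w + |b|) for all b" is equivalent to
  "c_b([..[V, Y_1], .., Y_t])(x) = 0 whenever t - w < |b|".  For X \<in> L(x)^i the latter holds with
  w = i: for t \<le> i because the iterated brackets vanish at x, and for t > i because [X, Y_1] is a
  section of \<Delta> whose iterated brackets of length < i vanish at x, so that it satisfies the former
  with w = i - 1.
*)

theory Submission
  imports Defs
begin

section \<open>Smooth functions on open sets\<close>

(* Closure properties of smooth_on are proved through the finite orders Ck, by induction on k. *)
definition Ck :: "nat \<Rightarrow> 'a::real_normed_vector set \<Rightarrow> ('a \<Rightarrow> 'b::real_normed_vector) \<Rightarrow> bool" where
  "Ck n V f \<longleftrightarrow> (\<forall>vs. length vs \<le> n \<longrightarrow> (\<forall>y\<in>V. pderiv_iter vs f differentiable (at y)))"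

lemma pderiv_iter_append: "pderiv_iter (vs @ ws) f = pderiv_iter vs (pderiv_iter ws f)"
  by (induction vs) auto

lemma smooth_on_iff_Ck: "smooth_on V f \<longleftrightarrow> (\<forall>n. Ck n V f)"
  unfolding smooth_on_def Ck_def by (metis order_refl)

lemma Ck_0: "Ck 0 V f \<longleftrightarrow> (\<forall>y\<in>V. f differentiable (at y))"
  unfolding Ck_def by auto

lemma Ck_Suc:
  "Ck (Suc n) V f \<longleftrightarrow> (\<forall>y\<in>V. f differentiable (at y)) \<and> (\<forall>v. Ck n V (pderiv_iter [v] f))"
proof
  assume "Ck (Suc n) V f"
  then show "(\<forall>y\<in>V. f differentiable (at y)) \<and> (\<forall>v. Ck n V (pderiv_iter [v] f))"
    unfolding Ck_def by (metis le0 list.size(3) pderiv_iter.simps(1) pderiv_iter_append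
        Suc_le_mono length_append_singleton)
next
  assume *: "(\<forall>y\<in>V. f differentiable (at y)) \<and> (\<forall>v. Ck n V (pderiv_iter [v] f))"
  show "Ck (Suc n) V f"
    unfolding Ck_def
  proof (intro allI impI)
    fix vs :: "'a list"
    assume "length vs \<le> Suc n"
    then show "\<forall>y\<in>V. pderiv_iter vs f differentiable (at y)"
      using * by (cases vs rule: rev_exhaust) (auto simp: Ck_def pderiv_iter_append)
  qed
qed

lemma Ck_Suc_has_derivative:
  "Ck (Suc n) V f \<Longrightarrow> y \<in> V \<Longrightarrow> (f has_derivative frechet_derivative f (at y)) (at y)"
  by (simp add: Ck_Suc frechet_derivative_works[symmetric])

lemma Ck_mono: "m \<le> n \<Longrightarrow> Ck n V f \<Longrightarrow> Ck m V f"
  unfolding Ck_def by auto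

lemma has_derivative_cong_ev:
  assumes "\<forall>\<^sub>F z in nhds y. f z = g z"
  shows "(f has_derivative D) (at y) \<longleftrightarrow> (g has_derivative D) (at y)"
proof -
  obtain S where "open S" "y \<in> S" "\<forall>z\<in>S. f z = g z"
    using assms unfolding eventually_nhds by blast
  then show ?thesis
    using has_derivative_transform_within_open[of f D y UNIV S g]
      has_derivative_transform_within_open[of g D y UNIV S f] by auto
qed

lemma frechet_derivative_cong_ev:
  "\<forall>\<^sub>F z in nhds y. f z = g z \<Longrightarrow> frechet_derivative f (at y) = frechet_derivative g (at y)"
  unfolding frechet_derivative_def by (simp add: has_derivative_cong_ev)

lemma differentiable_cong_ev:
  "\<forall>\<^sub>F z in nhds y. f z = g z \<Longrightarrow> f differentiable (at y) \<longleftrightarrow> g differentiable (at y)"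
  unfolding differentiable_def by (simp add: has_derivative_cong_ev)

lemma pderiv_iter_cong_ev:
  "\<forall>\<^sub>F z in nhds y. f z = g z \<Longrightarrow> \<forall>\<^sub>F z in nhds y. pderiv_iter vs f z = pderiv_iter vs g z"
proof (induction vs)
  case (Cons v vs)
  then have "\<forall>\<^sub>F z in nhds y. \<forall>\<^sub>F w in nhds z. pderiv_iter vs f w = pderiv_iter vs g w"
    by (simp add: eventually_eventually)
  then show ?case
    by eventually_elim (simp add: frechet_derivative_cong_ev)
qed simp

lemma Ck_cong:
  assumes "open V" "\<forall>y\<in>V. f y = g y" "Ck n V g"
  shows "Ck n V f"
proof -
  have "\<forall>\<^sub>F z in nhds y. f z = g z" if "y \<in> V" for y
    using assms(1,2) that unfolding eventually_nhds by blast
  then show ?thesis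
    using assms(3) unfolding Ck_def
    by (metis differentiable_cong_ev pderiv_iter_cong_ev)
qed

lemma Ck_SucI:
  assumes "open V" "\<And>y. y \<in> V \<Longrightarrow> (f has_derivative f' y) (at y)" "\<And>v. Ck n V (\<lambda>y. f' y v)"
  shows "Ck (Suc n) V f"
  unfolding Ck_Suc
proof (intro conjI allI ballI)
  show "f differentiable (at y)" if "y \<in> V" for y
    using assms(2)[OF that] unfolding differentiable_def by blast
  show "Ck n V (pderiv_iter [v] f)" for v
    by (rule Ck_cong[OF assms(1) _ assms(3)[of v]]) (use assms(2) frechet_derivative_at in fastforce)
qed

lemma Ck_const: "Ck n V (\<lambda>_. c)"
  by (induction n arbitrary: c) (auto simp: Ck_0 Ck_Suc)

lemma Ck_add:
  assumes "open V" "Ck n V f" "Ck n V g"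
  shows "Ck n V (\<lambda>y. f y + g y)"
  using assms(2,3)
proof (induction n arbitrary: f g)
  case (Suc n)
  show ?case
  proof (rule Ck_SucI[OF assms(1)])
    show "((\<lambda>y. f y + g y) has_derivative
        (\<lambda>h. frechet_derivative f (at y) h + frechet_derivative g (at y) h)) (at y)" if "y \<in> V" for y
      using Suc.prems that by (intro has_derivative_add Ck_Suc_has_derivative)
    show "Ck n V (\<lambda>y. frechet_derivative f (at y) v + frechet_derivative g (at y) v)" for v
      using Suc by (simp add: Ck_Suc)
  qed
qed (simp add: Ck_0)

lemma Ck_bilinear:
  fixes prod :: "'b::real_normed_vector \<Rightarrow> 'c::real_normed_vector \<Rightarrow> 'd::real_normed_vector"
    and f :: "'a::real_normed_vector \<Rightarrow> 'b" and g :: "'a \<Rightarrow> 'c"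
  assumes "open V" "bounded_bilinear prod" "Ck n V f" "Ck n V g"
  shows "Ck n V (\<lambda>y. prod (f y) (g y))"
  using assms(3,4)
proof (induction n arbitrary: f g)
  case 0
  then show ?case
    using bounded_bilinear.FDERIV[OF assms(2)] by (fastforce simp: Ck_0 differentiable_def)
next
  case (Suc n)
  have f: "Ck n V f" "\<And>v. Ck n V (pderiv_iter [v] f)" and g: "Ck n V g" "\<And>v. Ck n V (pderiv_iter [v] g)"
    using Suc.prems Ck_mono[of n "Suc n"] by (auto simp: Ck_Suc)
  show ?case
  proof (rule Ck_SucI[OF assms(1)])
    show "((\<lambda>y. prod (f y) (g y)) has_derivative (\<lambda>h. prod (f y) (frechet_derivative g (at y) h)
        + prod (frechet_derivative f (at y) h) (g y))) (at y)" if "y \<in> V" for y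
      using Suc.prems that
      by (intro bounded_bilinear.FDERIV[OF assms(2)] Ck_Suc_has_derivative)
    show "Ck n V (\<lambda>y. prod (f y) (frechet_derivative g (at y) v)
        + prod (frechet_derivative f (at y) v) (g y))" for v
      using Ck_add[OF assms(1) Suc.IH[OF f(1) g(2)] Suc.IH[OF f(2) g(1)]] by simp
  qed
qed

lemma Ck_inverse:
  fixes f :: "'a::real_normed_vector \<Rightarrow> real"
  assumes "open V" "Ck n V f" "\<forall>y\<in>V. f y \<noteq> 0"
  shows "Ck n V (\<lambda>y. inverse (f y))"
  using assms(2)
proof (induction n)
  case 0
  then show ?case
    using assms(3) by (auto simp: Ck_0)
next
  case (Suc n)
  have f: "Ck n V f" "\<And>v. Ck n V (pderiv_iter [v] f)"
    using Suc.prems Ck_mono[of n "Suc n"] by (auto simp: Ck_Suc)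
  have mult: "Ck n V (\<lambda>y. a y * b y)" if "Ck n V a" "Ck n V b" for a b :: "'a \<Rightarrow> real"
    by (rule Ck_bilinear[OF assms(1) bounded_bilinear_mult that])
  show ?case
  proof (rule Ck_SucI[OF assms(1)])
    show "((\<lambda>y. inverse (f y)) has_derivative
        (\<lambda>h. - (inverse (f y) * frechet_derivative f (at y) h * inverse (f y)))) (at y)" if "y \<in> V" for y
      using Deriv.has_derivative_inverse[OF _ Ck_Suc_has_derivative[OF Suc.prems that]] assms(3) that
      by blast
    show "Ck n V (\<lambda>y. - (inverse (f y) * frechet_derivative f (at y) v * inverse (f y)))" for v
      using mult[OF Ck_const mult[OF mult[OF Suc.IH[OF f(1)] f(2)] Suc.IH[OF f(1)]], of "-1"] by simp
  qed
qed

lemma smooth_on_cong: "open V \<Longrightarrow> \<forall>y\<in>V. f y = g y \<Longrightarrow> smooth_on V g \<Longrightarrow> smooth_on V f"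
  unfolding smooth_on_iff_Ck using Ck_cong by blast

lemma smooth_on_subset: "smooth_on V f \<Longrightarrow> V' \<subseteq> V \<Longrightarrow> smooth_on V' f"
  unfolding smooth_on_def by blast

lemma smooth_on_imp_differentiable: "smooth_on V f \<Longrightarrow> y \<in> V \<Longrightarrow> f differentiable (at y)"
  unfolding smooth_on_def by (metis pderiv_iter.simps(1))

lemma smooth_on_const: "smooth_on V (\<lambda>_. c)"
  by (simp add: smooth_on_iff_Ck Ck_const)

lemma smooth_on_add: "open V \<Longrightarrow> smooth_on V f \<Longrightarrow> smooth_on V g \<Longrightarrow> smooth_on V (\<lambda>y. f y + g y)"
  by (simp add: smooth_on_iff_Ck Ck_add)

lemma smooth_on_bilinear:
  fixes prod :: "'b::real_normed_vector \<Rightarrow> 'c::real_normed_vector \<Rightarrow> 'd::real_normed_vector"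
    and f :: "'a::real_normed_vector \<Rightarrow> 'b" and g :: "'a \<Rightarrow> 'c"
  shows "open V \<Longrightarrow> bounded_bilinear prod \<Longrightarrow> smooth_on V f \<Longrightarrow> smooth_on V g \<Longrightarrow>
    smooth_on V (\<lambda>y. prod (f y) (g y))"
  by (simp add: smooth_on_iff_Ck Ck_bilinear)

lemma smooth_on_scaleR: "open V \<Longrightarrow> smooth_on V f \<Longrightarrow> smooth_on V g \<Longrightarrow> smooth_on V (\<lambda>y. f y *\<^sub>R g y)"
  by (rule smooth_on_bilinear[OF _ bounded_bilinear_scaleR])

lemma smooth_on_mult:
  fixes f g :: "'a::real_normed_vector \<Rightarrow> real"
  shows "open V \<Longrightarrow> smooth_on V f \<Longrightarrow> smooth_on V g \<Longrightarrow> smooth_on V (\<lambda>y. f y * g y)"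
  by (rule smooth_on_bilinear[OF _ bounded_bilinear_mult])

lemma smooth_on_inner_left: "open V \<Longrightarrow> smooth_on V f \<Longrightarrow> smooth_on V (\<lambda>y. f y \<bullet> k)"
  by (rule smooth_on_bilinear[OF _ bounded_bilinear_inner _ smooth_on_const])

lemma smooth_on_inverse:
  fixes f :: "'a::real_normed_vector \<Rightarrow> real"
  shows "open V \<Longrightarrow> smooth_on V f \<Longrightarrow> \<forall>y\<in>V. f y \<noteq> 0 \<Longrightarrow> smooth_on V (\<lambda>y. inverse (f y))"
  by (simp add: smooth_on_iff_Ck Ck_inverse)

lemma smooth_on_diff:
  assumes "open V" "smooth_on V f" "smooth_on V g"
  shows "smooth_on V (\<lambda>y. f y - g y)"
  using smooth_on_add[OF assms(1,2) smooth_on_scaleR[OF assms(1) smooth_on_const assms(3)], of "-1"]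
  by simp

lemma smooth_on_sum:
  assumes "open V" "finite S" "\<forall>i\<in>S. smooth_on V (f i)"
  shows "smooth_on V (\<lambda>y. \<Sum>i\<in>S. f i y)"
  using assms(2,3)
  by (induction S rule: finite_induct) (auto intro: smooth_on_add[OF assms(1)] smooth_on_const)

lemma smooth_on_frechet_derivative:
  assumes "smooth_on V f"
  shows "smooth_on V (\<lambda>y. frechet_derivative f (at y) v)"
  unfolding smooth_on_def
proof (intro allI ballI)
  fix vs y
  assume "y \<in> V"
  then have "pderiv_iter (vs @ [v]) f differentiable (at y)"
    using assms unfolding smooth_on_def by blast
  then show "pderiv_iter vs (\<lambda>y. frechet_derivative f (at y) v) differentiable (at y)"
    by (simp add: pderiv_iter_append)
qed

lemma smooth_on_euclidean_components:
  fixes f :: "'a::real_normed_vector \<Rightarrow> 'b::euclidean_space"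
  assumes "open V" "\<forall>b\<in>Basis. smooth_on V (\<lambda>y. f y \<bullet> b)"
  shows "smooth_on V f"
proof (rule smooth_on_cong[OF assms(1)])
  show "\<forall>y\<in>V. f y = (\<Sum>b\<in>Basis. (f y \<bullet> b) *\<^sub>R b)"
    by (simp add: euclidean_representation)
  show "smooth_on V (\<lambda>y. \<Sum>b\<in>Basis. (f y \<bullet> b) *\<^sub>R b)"
    using assms by (auto intro!: smooth_on_sum smooth_on_scaleR smooth_on_const)
qed

lemma lie_deriv_euclidean:
  fixes f :: "'a::euclidean_space \<Rightarrow> real"
  assumes "f differentiable (at y)"
  shows "lie_deriv Y f y = (\<Sum>b\<in>Basis. (Y y \<bullet> b) * frechet_derivative f (at y) b)"
proof -
  have "linear (frechet_derivative f (at y))"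
    by (rule linear_frechet_derivative[OF assms])
  then show ?thesis
    unfolding lie_deriv_def
    by (subst euclidean_representation[symmetric, of "Y y"])
      (simp add: linear_sum linear_scale)
qed

lemma smooth_on_lie_deriv:
  fixes Y :: "'a::euclidean_space \<Rightarrow> 'a"
  assumes "open V" "smooth_on V Y" "smooth_on V f"
  shows "smooth_on V (lie_deriv Y f)"
proof (rule smooth_on_cong[OF assms(1)])
  show "\<forall>y\<in>V. lie_deriv Y f y = (\<Sum>b\<in>Basis. (Y y \<bullet> b) * frechet_derivative f (at y) b)"
    using assms(3) by (simp add: lie_deriv_euclidean smooth_on_imp_differentiable)
  show "smooth_on V (\<lambda>y. \<Sum>b\<in>Basis. (Y y \<bullet> b) * frechet_derivative f (at y) b)"
    using assms by (auto intro!: smooth_on_sum smooth_on_mult smooth_on_inner_left smooth_on_frechet_derivative)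
qed

lemma frechet_derivative_inner_left:
  "f differentiable (at y) \<Longrightarrow> frechet_derivative (\<lambda>z. f z \<bullet> b) (at y) v = frechet_derivative f (at y) v \<bullet> b"
  by (metis (no_types) frechet_derivative_at frechet_derivative_works
      bounded_linear.has_derivative[OF bounded_linear_inner_left])

lemma lie_bracket_inner_left:
  "X differentiable (at y) \<Longrightarrow> Y differentiable (at y) \<Longrightarrow>
    lie_bracket X Y y \<bullet> b = lie_deriv X (\<lambda>z. Y z \<bullet> b) y - lie_deriv Y (\<lambda>z. X z \<bullet> b) y"
  by (simp add: lie_bracket_def lie_deriv_def frechet_derivative_inner_left inner_diff_left)

lemma smooth_on_lie_bracket:
  fixes X Y :: "'a::euclidean_space \<Rightarrow> 'a"
  assumes "open V" "smooth_on V X" "smooth_on V Y"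
  shows "smooth_on V (lie_bracket X Y)"
proof (rule smooth_on_euclidean_components[OF assms(1)], intro ballI)
  fix b :: 'a
  show "smooth_on V (\<lambda>y. lie_bracket X Y y \<bullet> b)"
  proof (rule smooth_on_cong[OF assms(1)])
    show "\<forall>y\<in>V. lie_bracket X Y y \<bullet> b = lie_deriv X (\<lambda>z. Y z \<bullet> b) y - lie_deriv Y (\<lambda>z. X z \<bullet> b) y"
      using assms by (simp add: lie_bracket_inner_left smooth_on_imp_differentiable)
    show "smooth_on V (\<lambda>y. lie_deriv X (\<lambda>z. Y z \<bullet> b) y - lie_deriv Y (\<lambda>z. X z \<bullet> b) y)"
      using assms by (intro smooth_on_diff smooth_on_lie_deriv smooth_on_inner_left)
  qed
qed

section \<open>Germs and iterated Lie derivatives\<close>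

definition smooth_near :: "'a::real_normed_vector \<Rightarrow> ('a \<Rightarrow> 'b::real_normed_vector) \<Rightarrow> bool" where
  "smooth_near x f \<longleftrightarrow> (\<exists>V. open V \<and> x \<in> V \<and> smooth_on V f)"

lemma smooth_near_eventually:
  "smooth_near x f \<longleftrightarrow> (\<forall>\<^sub>F y in nhds x. \<forall>vs. pderiv_iter vs f differentiable (at y))"
  unfolding smooth_near_def smooth_on_def eventually_nhds by blast

lemma smooth_near_binop:
  assumes "smooth_near x f" "smooth_near x g"
    and "\<And>V. open V \<Longrightarrow> smooth_on V f \<Longrightarrow> smooth_on V g \<Longrightarrow> smooth_on V h"
  shows "smooth_near x h"
proof -
  obtain V1 V2 where "open V1" "x \<in> V1" "smooth_on V1 f" "open V2" "x \<in> V2" "smooth_on V2 g"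
    using assms(1,2) unfolding smooth_near_def by blast
  then show ?thesis
    unfolding smooth_near_def using assms(3)[of "V1 \<inter> V2"]
    by (meson IntI inf_le1 inf_le2 open_Int smooth_on_subset)
qed

lemma smooth_near_sum:
  assumes "finite S" "\<forall>i\<in>S. smooth_near x (f i)"
  shows "smooth_near x (\<lambda>y. \<Sum>i\<in>S. f i y)"
  using assms
proof (induction S rule: finite_induct)
  case empty
  then show ?case
    unfolding smooth_near_def using smooth_on_const by auto
next
  case (insert i S)
  then show ?case
    by (auto intro: smooth_near_binop[OF _ _ smooth_on_add])
qed

lemma smooth_near_cong_ev:
  assumes "\<forall>\<^sub>F y in nhds x. f y = g y" "smooth_near x g"
  shows "smooth_near x f"
proof -
  obtain S V where "open S" "x \<in> S" "\<forall>y\<in>S. f y = g y" "open V" "x \<in> V" "smooth_on V g"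
    using assms unfolding eventually_nhds smooth_near_def by blast
  then show ?thesis
    unfolding smooth_near_def
    by (metis Int_iff inf_le2 open_Int smooth_on_cong smooth_on_subset)
qed

lemma smooth_near_eventually_differentiable:
  "smooth_near x f \<Longrightarrow> \<forall>\<^sub>F y in nhds x. f differentiable (at y)"
  unfolding smooth_near_def eventually_nhds using smooth_on_imp_differentiable by blast

lemma lie_deriv_cong_ev:
  "\<forall>\<^sub>F w in nhds z. f w = g w \<Longrightarrow> lie_deriv Y f z = lie_deriv Y g z"
  unfolding lie_deriv_def by (simp add: frechet_derivative_cong_ev)

lemma lie_derivs_cong_ev:
  "\<forall>\<^sub>F z in nhds y. f z = g z \<Longrightarrow> \<forall>\<^sub>F z in nhds y. foldr lie_deriv Ys f z = foldr lie_deriv Ys g z"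
proof (induction Ys)
  case (Cons Y Ys)
  then have "\<forall>\<^sub>F z in nhds y. \<forall>\<^sub>F w in nhds z. foldr lie_deriv Ys f w = foldr lie_deriv Ys g w"
    by (simp add: eventually_eventually)
  then show ?case
    by eventually_elim (simp add: lie_deriv_cong_ev)
qed simp

lemma lie_deriv_lincomb:
  assumes "f differentiable (at y)" "g differentiable (at y)"
  shows "lie_deriv Y (\<lambda>z. a * f z + b * g z) y = a * lie_deriv Y f y + b * lie_deriv Y g y"
proof -
  have "((\<lambda>z. a * f z + b * g z) has_derivative
      (\<lambda>h. a * frechet_derivative f (at y) h + b * frechet_derivative g (at y) h)) (at y)"
    using assms by (intro has_derivative_add has_derivative_mult_right frechet_derivative_works[THEN iffD1])
  then show ?thesis
    unfolding lie_deriv_def by (simp add: frechet_derivative_at[symmetric])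
qed

lemma smooth_on_lie_derivs:
  fixes f :: "'a::euclidean_space \<Rightarrow> real"
  assumes "open V" "\<forall>Y\<in>set Ys. smooth_on V Y" "smooth_on V f"
  shows "smooth_on V (foldr lie_deriv Ys f)"
  using assms(2) by (induction Ys) (auto intro: smooth_on_lie_deriv[OF assms(1)] assms(3))

lemma lie_derivs_lincomb:
  fixes f g :: "'a::euclidean_space \<Rightarrow> real"
  assumes "open V" "\<forall>Y\<in>set Ys. smooth_on V Y" "smooth_on V f" "smooth_on V g" "y \<in> V"
  shows "foldr lie_deriv Ys (\<lambda>z. a * f z + b * g z) y
    = a * foldr lie_deriv Ys f y + b * foldr lie_deriv Ys g y"
  using assms(2,5)
proof (induction Ys arbitrary: y)
  case (Cons Y Ys)
  let ?F = "foldr lie_deriv Ys f" and ?G = "foldr lie_deriv Ys g"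
  have "\<forall>z\<in>V. foldr lie_deriv Ys (\<lambda>z. a * f z + b * g z) z = a * ?F z + b * ?G z"
    using Cons by simp
  then have "\<forall>\<^sub>F z in nhds y. foldr lie_deriv Ys (\<lambda>z. a * f z + b * g z) z = a * ?F z + b * ?G z"
    using assms(1) Cons.prems(2) unfolding eventually_nhds by blast
  then have "lie_deriv Y (foldr lie_deriv Ys (\<lambda>z. a * f z + b * g z)) y
      = lie_deriv Y (\<lambda>z. a * ?F z + b * ?G z) y"
    by (rule lie_deriv_cong_ev)
  also have "\<dots> = a * lie_deriv Y ?F y + b * lie_deriv Y ?G y"
  proof -
    have "?F differentiable (at y)" "?G differentiable (at y)"
      using Cons.prems assms by (auto intro: smooth_on_imp_differentiable smooth_on_lie_derivs)
    then show ?thesis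
      by (rule lie_deriv_lincomb)
  qed
  finally show ?case
    by simp
qed simp

lemma lie_derivs_lincomb_near:
  fixes f g :: "'a::euclidean_space \<Rightarrow> real"
  assumes "\<forall>Y\<in>set Ys. smooth_near x Y" "smooth_near x f" "smooth_near x g"
  shows "foldr lie_deriv Ys (\<lambda>z. a * f z + b * g z) x
    = a * foldr lie_deriv Ys f x + b * foldr lie_deriv Ys g x"
proof -
  have "\<forall>\<^sub>F y in nhds x. (\<forall>Y\<in>set Ys. \<forall>vs. pderiv_iter vs Y differentiable (at y))
      \<and> (\<forall>vs. pderiv_iter vs f differentiable (at y)) \<and> (\<forall>vs. pderiv_iter vs g differentiable (at y))"
    using assms by (simp add: smooth_near_eventually eventually_conj_iff eventually_ball_finite_distrib)
  then obtain V where "open V" "x \<in> V" "\<forall>Y\<in>set Ys. smooth_on V Y" "smooth_on V f" "smooth_on V g"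
    unfolding eventually_nhds smooth_on_def by (metis (no_types, lifting))
  then show ?thesis
    by (blast intro: lie_derivs_lincomb)
qed

lemma lie_deriv_mult:
  assumes "f differentiable (at y)" "g differentiable (at y)"
  shows "lie_deriv Y (\<lambda>z. f z * g z) y = lie_deriv Y f y * g y + f y * lie_deriv Y g y"
  using has_derivative_mult[OF frechet_derivative_works[THEN iffD1, OF assms(1)]
      frechet_derivative_works[THEN iffD1, OF assms(2)]]
  unfolding lie_deriv_def by (simp add: frechet_derivative_at[symmetric])

lemma local_section_imp_smooth_near: "local_section U E x Y \<Longrightarrow> smooth_near x Y"
  unfolding local_section_def section_on_def smooth_near_def by blast

lemma lie_derivs_zero: "foldr lie_deriv Ys (\<lambda>_. 0) = (\<lambda>_. 0)"
  by (induction Ys) (auto simp: lie_deriv_def)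

section \<open>Coefficients with respect to a smooth frame\<close>

lemma independent_family_coefficients_eq_0:
  fixes v :: "'i \<Rightarrow> 'a::real_vector"
  assumes "finite I" "inj_on v I" "independent (v ` I)" "(\<Sum>i\<in>I. c i *\<^sub>R v i) = 0"
  shows "\<forall>i\<in>I. c i = 0"
proof -
  let ?u = "\<lambda>w. c (the_inv_into I v w)"
  have "(\<Sum>w\<in>v ` I. ?u w *\<^sub>R w) = (\<Sum>i\<in>I. c i *\<^sub>R v i)"
    by (simp add: sum.reindex[OF assms(2)] the_inv_into_f_f[OF assms(2)])
  then have "\<forall>w\<in>v ` I. ?u w = 0"
    using assms(1,3,4) dependent_finite[of "v ` I"] by auto
  then show ?thesis
    by (auto simp: the_inv_into_f_f[OF assms(2)])
qed

lemma span_family_sum: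
  fixes v :: "'i \<Rightarrow> 'a::real_vector"
  assumes "finite I" "inj_on v I" "w \<in> span (v ` I)"
  obtains c where "w = (\<Sum>i\<in>I. c i *\<^sub>R v i)"
proof -
  obtain u where "w = (\<Sum>z\<in>v ` I. u z *\<^sub>R z)"
    using assms(1,3) span_finite[of "v ` I"] by auto
  then have "w = (\<Sum>i\<in>I. u (v i) *\<^sub>R v i)"
    by (simp add: sum.reindex[OF assms(2)])
  then show ?thesis
    by (rule that)
qed

lemma smooth_on_nonzero_component:
  fixes F :: "'a::real_normed_vector \<Rightarrow> 'b::euclidean_space"
  assumes "open A" "x \<in> A" "smooth_on A F" "F x \<noteq> 0"
  obtains k A' where "k \<in> Basis" "open A'" "x \<in> A'" "A' \<subseteq> A" "\<forall>y\<in>A'. F y \<bullet> k \<noteq> 0"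
proof -
  obtain k where "k \<in> Basis" "F x \<bullet> k \<noteq> 0"
    using assms(4) by (metis euclidean_all_zero_iff)
  have "isCont (\<lambda>y. F y \<bullet> k) x"
    using smooth_on_imp_differentiable[OF smooth_on_inner_left[OF assms(1,3)] assms(2)]
    by (rule differentiable_imp_continuous_within)
  then obtain e where "e > 0" "\<forall>y. dist x y < e \<longrightarrow> F y \<bullet> k \<noteq> 0"
    using continuous_at_avoid[of x "\<lambda>y. F y \<bullet> k" 0] \<open>F x \<bullet> k \<noteq> 0\<close> by blast
  then show ?thesis
    using that[of k "A \<inter> ball x e"] \<open>k \<in> Basis\<close> assms(1,2) by auto
qed

definition proj_along :: "'a::real_inner \<Rightarrow> 'a \<Rightarrow> 'a \<Rightarrow> 'a" where
  "proj_along z k v = v - ((v \<bullet> k) / (z \<bullet> k)) *\<^sub>R z"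

lemma proj_along_sum: "(\<Sum>i\<in>I. c i *\<^sub>R proj_along z k (v i)) = proj_along z k (\<Sum>i\<in>I. c i *\<^sub>R v i)"
  by (simp add: proj_along_def scaleR_diff_right sum_subtractf scaleR_sum_left[symmetric]
      inner_sum_left sum_divide_distrib[symmetric])

lemma proj_along_self: "z \<bullet> k \<noteq> 0 \<Longrightarrow> proj_along z k z = 0"
  by (simp add: proj_along_def)

lemma independent_proj_along:
  assumes "finite I" "j \<notin> I" "\<forall>c. (\<Sum>i\<in>insert j I. c i *\<^sub>R v i) = 0 \<longrightarrow> (\<forall>i\<in>insert j I. c i = 0)"
    and "(\<Sum>i\<in>I. c i *\<^sub>R proj_along (v j) k (v i)) = 0" "i \<in> I"
  shows "c i = 0"
proof -
  define c' where "c' l = (if l = j then - ((\<Sum>i\<in>I. c i *\<^sub>R v i) \<bullet> k) / (v j \<bullet> k) else c l)" for l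
  have "(\<Sum>l\<in>I. c' l *\<^sub>R v l) = (\<Sum>l\<in>I. c l *\<^sub>R v l)"
    using assms(2) by (intro sum.cong) (auto simp: c'_def)
  then have "(\<Sum>l\<in>insert j I. c' l *\<^sub>R v l) = 0"
    using assms(1,2,4) unfolding proj_along_sum by (simp add: proj_along_def c'_def)
  then have "c' i = 0"
    using assms(3,5) by blast
  moreover have "i \<noteq> j"
    using assms(2,5) by blast
  ultimately show ?thesis
    by (simp add: c'_def)
qed

lemma proj_along_expansion:
  assumes "finite I" "j \<notin> I" "v j \<bullet> k \<noteq> 0"
  shows "proj_along (v j) k (\<Sum>i\<in>insert j I. d i *\<^sub>R v i) = (\<Sum>i\<in>I. d i *\<^sub>R proj_along (v j) k (v i))"
  using proj_along_sum[of d "v j" k v "insert j I"] proj_along_self[OF assms(3)] assms(1,2) by simp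

lemma smooth_on_proj_along:
  assumes "open A" "smooth_on A z" "smooth_on A v" "\<forall>y\<in>A. z y \<bullet> k \<noteq> 0"
  shows "smooth_on A (\<lambda>y. proj_along (z y) k (v y))"
  unfolding proj_along_def divide_inverse
  using assms
  by (intro smooth_on_diff smooth_on_scaleR smooth_on_mult smooth_on_inner_left smooth_on_inverse) auto

lemma smooth_coefficients_unproject:
  fixes Zs :: "'i \<Rightarrow> 'a::real_normed_vector \<Rightarrow> 'b::euclidean_space"
  assumes "open A" "finite I" "j \<notin> I" "\<forall>i\<in>insert j I. smooth_on A (Zs i)" "smooth_on A F"
    and "\<forall>y\<in>A. Zs j y \<bullet> k \<noteq> 0" "\<forall>i\<in>I. smooth_on A (c i)"
    and "\<forall>y\<in>A. proj_along (Zs j y) k (F y) = (\<Sum>i\<in>I. c i y *\<^sub>R proj_along (Zs j y) k (Zs i y))"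
  shows "\<exists>c'. (\<forall>i\<in>insert j I. smooth_on A (c' i)) \<and> (\<forall>y\<in>A. F y = (\<Sum>i\<in>insert j I. c' i y *\<^sub>R Zs i y))"
proof -
  define S where "S y = (\<Sum>i\<in>I. c i y *\<^sub>R Zs i y)" for y
  define c' where "c' i = (if i = j then (\<lambda>y. ((F y - S y) \<bullet> k) / (Zs j y \<bullet> k)) else c i)" for i
  have "smooth_on A S"
    unfolding S_def using assms(1,2,4,7) by (intro smooth_on_sum smooth_on_scaleR ballI) auto
  then have "smooth_on A (c' j)"
    unfolding c'_def divide_inverse using assms(1,4,5,6)
    by (auto intro!: smooth_on_mult smooth_on_inner_left smooth_on_diff smooth_on_inverse)
  then have "\<forall>i\<in>insert j I. smooth_on A (c' i)"
    using assms(3,7) by (auto simp: c'_def)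
  moreover have "F y = (\<Sum>i\<in>insert j I. c' i y *\<^sub>R Zs i y)" if "y \<in> A" for y
  proof -
    have "F y = proj_along (Zs j y) k (F y) + ((F y \<bullet> k) / (Zs j y \<bullet> k)) *\<^sub>R Zs j y"
      by (simp add: proj_along_def)
    also have "proj_along (Zs j y) k (F y) = proj_along (Zs j y) k (S y)"
      using assms(8) that unfolding S_def proj_along_sum by simp
    moreover have "(\<Sum>i\<in>I. c' i y *\<^sub>R Zs i y) = S y"
      unfolding S_def using assms(3) by (intro sum.cong) (auto simp: c'_def)
    ultimately show ?thesis
      using assms(2,3) by (simp add: c'_def proj_along_def diff_divide_distrib inner_diff_left algebra_simps)
  qed
  ultimately show ?thesis
    by blast
qed

lemma smooth_frame_coefficients:
  fixes Zs :: "'i \<Rightarrow> 'a::real_normed_vector \<Rightarrow> 'b::euclidean_space"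
  assumes "finite I" "open A" "x \<in> A" "\<forall>i\<in>I. smooth_on A (Zs i)" "smooth_on A F"
    and "\<forall>y\<in>A. \<forall>c. (\<Sum>i\<in>I. c i *\<^sub>R Zs i y) = 0 \<longrightarrow> (\<forall>i\<in>I. c i = 0)"
    and "\<forall>y\<in>A. \<exists>c. F y = (\<Sum>i\<in>I. c i *\<^sub>R Zs i y)"
  shows "\<exists>A' c. open A' \<and> x \<in> A' \<and> A' \<subseteq> A \<and> (\<forall>i\<in>I. smooth_on A' (c i))
    \<and> (\<forall>y\<in>A'. F y = (\<Sum>i\<in>I. c i y *\<^sub>R Zs i y))"
  using assms(1) assms(2-)
proof (induction I arbitrary: Zs F A rule: finite_induct)
  case empty
  then show ?case
    by (intro exI[of _ A]) auto
next
  case (insert j I)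
  note indep = insert.prems(5) and spans = insert.prems(6)
  have "Zs j x \<noteq> 0"
  proof
    assume "Zs j x = 0"
    moreover have "(\<Sum>i\<in>I. (if i = j then 1 else 0) *\<^sub>R Zs i x) = 0"
      using insert.hyps(2) by (intro sum.neutral) auto
    ultimately have "(\<Sum>i\<in>insert j I. (if i = j then 1 else 0) *\<^sub>R Zs i x) = 0"
      using insert.hyps by simp
    from indep[rule_format, OF insert.prems(2) this, of j] show False
      by simp
  qed
  moreover have "smooth_on A (Zs j)"
    using insert.prems(3) by simp
  ultimately obtain k A1 where A1: "open A1" "x \<in> A1" "A1 \<subseteq> A" "\<forall>y\<in>A1. Zs j y \<bullet> k \<noteq> 0"
    using smooth_on_nonzero_component[OF insert.prems(1,2)] by metis
  have Zs_A1: "\<forall>i\<in>insert j I. smooth_on A1 (Zs i)" and F_A1: "smooth_on A1 F"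
    using insert.prems(3,4) smooth_on_subset[OF _ A1(3)] by blast+
  \<comment> \<open>Projecting along \<open>Zs j\<close> onto \<open>k\<^sup>\<bottom>\<close> removes \<open>Zs j\<close> from the frame.\<close>
  define Z' where "Z' i y = proj_along (Zs j y) k (Zs i y)" for i y
  define F' where "F' y = proj_along (Zs j y) k (F y)" for y
  have "\<forall>i\<in>I. smooth_on A1 (Z' i)" "smooth_on A1 F'"
    unfolding Z'_def F'_def using A1(1,4) Zs_A1 F_A1 by (auto intro!: smooth_on_proj_along)
  moreover have "\<forall>y\<in>A1. \<forall>c. (\<Sum>i\<in>I. c i *\<^sub>R Z' i y) = 0 \<longrightarrow> (\<forall>i\<in>I. c i = 0)"
  proof (intro ballI allI impI)
    fix y c i
    assume "y \<in> A1" "(\<Sum>i\<in>I. c i *\<^sub>R Z' i y) = 0" "i \<in> I"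
    then show "c i = 0"
      using independent_proj_along[OF insert.hyps, where v="\<lambda>l. Zs l y"] indep A1(3)
      unfolding Z'_def by blast
  qed
  moreover have "\<forall>y\<in>A1. \<exists>c. F' y = (\<Sum>i\<in>I. c i *\<^sub>R Z' i y)"
  proof
    fix y
    assume "y \<in> A1"
    then obtain d where "F y = (\<Sum>i\<in>insert j I. d i *\<^sub>R Zs i y)"
      using spans A1(3) by blast
    then have "F' y = (\<Sum>i\<in>I. d i *\<^sub>R Z' i y)"
      unfolding F'_def Z'_def
      using proj_along_expansion[OF insert.hyps, where v="\<lambda>l. Zs l y"] A1(4) \<open>y \<in> A1\<close> by simp
    then show "\<exists>c. F' y = (\<Sum>i\<in>I. c i *\<^sub>R Z' i y)"
      by blast
  qed
  ultimately obtain A2 c where A2: "open A2" "x \<in> A2" "A2 \<subseteq> A1" "\<forall>i\<in>I. smooth_on A2 (c i)"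
    "\<forall>y\<in>A2. F' y = (\<Sum>i\<in>I. c i y *\<^sub>R Z' i y)"
    using insert.IH[of A1 Z' F'] A1 by blast
  have "\<exists>c'. (\<forall>i\<in>insert j I. smooth_on A2 (c' i)) \<and> (\<forall>y\<in>A2. F y = (\<Sum>i\<in>insert j I. c' i y *\<^sub>R Zs i y))"
    using A1(4) A2 Zs_A1 F_A1 smooth_on_subset[OF _ A2(3)] unfolding F'_def Z'_def
    by (intro smooth_coefficients_unproject[OF A2(1) insert.hyps]) (blast+)
  then show ?case
    using A1(3) A2(1-3) by blast
qed

section \<open>Adapted frames and the filtration of \<open>L(x)\<close>\<close>

lemma finite_frame_idx: "finite (frame_idx r \<kappa> s)"
proof -
  have "frame_idx r \<kappa> s = Sigma {1..min s \<kappa>} (\<lambda>t. {..<r t})"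
    unfolding frame_idx_def by auto
  then show ?thesis
    by simp
qed

lemma lie_bracket_expansion:
  assumes "open A" "y \<in> A" "finite I" "\<forall>z\<in>A. V z = (\<Sum>a\<in>I. c a z *\<^sub>R Z a z)"
    and "\<forall>a\<in>I. c a differentiable (at y) \<and> Z a differentiable (at y)" "Y differentiable (at y)"
  shows "lie_bracket V Y y
    = (\<Sum>a\<in>I. c a y *\<^sub>R lie_bracket (Z a) Y y) - (\<Sum>a\<in>I. lie_deriv Y (c a) y *\<^sub>R Z a y)"
proof -
  have "\<forall>\<^sub>F z in nhds y. V z = (\<Sum>a\<in>I. c a z *\<^sub>R Z a z)"
    using assms(1,2,4) unfolding eventually_nhds by blast
  then have "frechet_derivative V (at y) = frechet_derivative (\<lambda>z. \<Sum>a\<in>I. c a z *\<^sub>R Z a z) (at y)"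
    by (rule frechet_derivative_cong_ev)
  also have "\<dots> = (\<lambda>h. \<Sum>a\<in>I. c a y *\<^sub>R frechet_derivative (Z a) (at y) h
      + frechet_derivative (c a) (at y) h *\<^sub>R Z a y)"
    using assms(5)
    by (intro frechet_derivative_at[symmetric] has_derivative_sum has_derivative_scaleR
        frechet_derivative_works[THEN iffD1]) auto
  finally have dV: "frechet_derivative V (at y) (Y y) = (\<Sum>a\<in>I. c a y *\<^sub>R frechet_derivative (Z a) (at y) (Y y)
      + lie_deriv Y (c a) y *\<^sub>R Z a y)"
    by (simp add: lie_deriv_def)
  have "linear (frechet_derivative Y (at y))"
    by (rule linear_frechet_derivative[OF assms(6)])
  then have dY: "frechet_derivative Y (at y) (V y) = (\<Sum>a\<in>I. c a y *\<^sub>R frechet_derivative Y (at y) (Z a y))"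
    using assms(2,4) by (simp add: linear_sum linear_scale)
  show ?thesis
    unfolding lie_bracket_def dV dY
    by (simp add: scaleR_right_diff_distrib sum_subtractf sum.distrib algebra_simps)
qed

lemma Lfilt_imp_Lx: "Lfilt U D x i X \<Longrightarrow> Lx U D x X"
  by (induction i) auto

lemma Lfilt_brackets_eq_0:
  "Lfilt U D x i X \<Longrightarrow> length Ys \<le> i \<Longrightarrow> \<forall>Y\<in>set Ys. local_section U D x Y
    \<Longrightarrow> foldl lie_bracket X Ys x = 0"
  by (induction i) (auto simp: le_Suc_eq)

locale adapted_frame =
  fixes U :: "'a::euclidean_space set" and D :: "'a \<Rightarrow> 'a set" and x :: 'a
    and \<kappa> :: nat and r :: "nat \<Rightarrow> nat" and Z :: "nat \<Rightarrow> nat \<Rightarrow> 'a \<Rightarrow> 'a" and W :: "'a set"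
  assumes open_W: "open W" and x_in_W: "x \<in> W" and W_subset: "W \<subseteq> U"
    and flag_top: "\<forall>y\<in>U. flag U D \<kappa> y = UNIV"
    and frame_sections: "\<forall>j l. 1 \<le> j \<and> j \<le> \<kappa> \<and> l < r j \<longrightarrow> section_on U (flag U D j) W (Z j l)"
    and frame_bases: "\<forall>s\<ge>1. \<forall>y\<in>W.
        inj_on (\<lambda>(t, l). Z t l y) (frame_idx r \<kappa> s) \<and>
        independent ((\<lambda>(t, l). Z t l y) ` frame_idx r \<kappa> s) \<and>
        span ((\<lambda>(t, l). Z t l y) ` frame_idx r \<kappa> s) = flag U D s y"
begin

definition I :: "(nat \<times> nat) set" where
  "I = frame_idx r \<kappa> \<kappa>"

definition frame :: "nat \<times> nat \<Rightarrow> 'a \<Rightarrow> 'a" where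
  "frame a = Z (fst a) (snd a)"

(* Unique on W by independence of the frame; unspecified outside W. *)
definition coef :: "('a \<Rightarrow> 'a) \<Rightarrow> nat \<times> nat \<Rightarrow> 'a \<Rightarrow> real" where
  "coef V a y = (SOME c. V y = (\<Sum>b\<in>I. c b *\<^sub>R frame b y)) a"

lemma kappa_pos: "1 \<le> \<kappa>"
proof (rule ccontr)
  assume "\<not> 1 \<le> \<kappa>"
  then have "\<kappa> = 0"
    by simp
  then have "flag U D \<kappa> x = {0}"
    by simp
  moreover have "flag U D \<kappa> x = UNIV"
    using flag_top x_in_W W_subset by blast
  ultimately have "(UNIV :: 'a set) = {0}"
    by simp
  moreover obtain b :: 'a where "b \<in> Basis"
    using nonempty_Basis by blast
  ultimately show False
    using nonzero_Basis by blast
qed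

lemma finite_I: "finite I"
  unfolding I_def by (rule finite_frame_idx)

lemma mem_I_iff: "a \<in> I \<longleftrightarrow> 1 \<le> fst a \<and> fst a \<le> \<kappa> \<and> snd a < r (fst a)"
  unfolding I_def frame_idx_def by (cases a) auto

lemma mem_frame_idx_iff: "a \<in> frame_idx r \<kappa> s \<longleftrightarrow> a \<in> I \<and> fst a \<le> s"
  unfolding I_def frame_idx_def by (cases a) auto

lemma frame_section: "a \<in> I \<Longrightarrow> section_on U (flag U D (fst a)) W (frame a)"
  using frame_sections unfolding mem_I_iff frame_def by (cases a) auto

lemma smooth_near_frame: "a \<in> I \<Longrightarrow> smooth_near x (frame a)"
  using frame_section x_in_W unfolding section_on_def smooth_near_def by blast

lemma frame_basis:
  assumes "1 \<le> s" "y \<in> W"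
  shows "inj_on (\<lambda>a. frame a y) (frame_idx r \<kappa> s)"
    and "independent ((\<lambda>a. frame a y) ` frame_idx r \<kappa> s)"
    and "span ((\<lambda>a. frame a y) ` frame_idx r \<kappa> s) = flag U D s y"
proof -
  have "(\<lambda>(t, l). Z t l y) = (\<lambda>a. frame a y)"
    by (auto simp: frame_def)
  moreover have "inj_on (\<lambda>(t, l). Z t l y) (frame_idx r \<kappa> s)
      \<and> independent ((\<lambda>(t, l). Z t l y) ` frame_idx r \<kappa> s)
      \<and> span ((\<lambda>(t, l). Z t l y) ` frame_idx r \<kappa> s) = flag U D s y"
    using frame_bases assms by blast
  ultimately show "inj_on (\<lambda>a. frame a y) (frame_idx r \<kappa> s)"
    and "independent ((\<lambda>a. frame a y) ` frame_idx r \<kappa> s)"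
    and "span ((\<lambda>a. frame a y) ` frame_idx r \<kappa> s) = flag U D s y"
    by simp_all
qed

lemma frame_independent:
  assumes "y \<in> W" "(\<Sum>a\<in>I. c a *\<^sub>R frame a y) = 0" "a \<in> I"
  shows "c a = 0"
  using independent_family_coefficients_eq_0[OF finite_I _ _ assms(2)] assms(3)
    frame_basis(1,2)[OF kappa_pos assms(1)] unfolding I_def by blast

lemma flag_expansion:
  assumes "y \<in> W" "1 \<le> s" "v \<in> flag U D s y"
  obtains c where "v = (\<Sum>a\<in>I. c a *\<^sub>R frame a y)" "\<forall>a\<in>I. s < fst a \<longrightarrow> c a = 0"
proof -
  let ?J = "frame_idx r \<kappa> s"
  obtain c where c: "v = (\<Sum>a\<in>?J. c a *\<^sub>R frame a y)"
    using span_family_sum[OF finite_frame_idx frame_basis(1)[OF assms(2,1)]] frame_basis(3) assms by blast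
  have "?J \<subseteq> I"
    using mem_frame_idx_iff by blast
  then have "v = (\<Sum>a\<in>I. (if a \<in> ?J then c a else 0) *\<^sub>R frame a y)"
    unfolding c by (intro sum.mono_neutral_cong_left finite_I) auto
  then show ?thesis
    by (rule that) (auto simp: mem_frame_idx_iff)
qed

lemma coef_expansion: "y \<in> W \<Longrightarrow> V y = (\<Sum>a\<in>I. coef V a y *\<^sub>R frame a y)"
  using flag_expansion[OF _ kappa_pos, of y "V y"] flag_top W_subset
  unfolding coef_def by (metis (mono_tags) UNIV_I someI_ex subsetD)

lemma coef_unique:
  assumes "y \<in> W" "V y = (\<Sum>a\<in>I. c a *\<^sub>R frame a y)" "a \<in> I"
  shows "coef V a y = c a"
proof -
  have "(\<Sum>a\<in>I. (coef V a y - c a) *\<^sub>R frame a y) = 0"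
    using coef_expansion[OF assms(1), of V] assms(2) by (simp add: scaleR_diff_left sum_subtractf)
  then show ?thesis
    using frame_independent[OF assms(1) _ assms(3)] by fastforce
qed

lemma coef_eq_0_above_flag:
  assumes "y \<in> W" "1 \<le> s" "V y \<in> flag U D s y" "a \<in> I" "s < fst a"
  shows "coef V a y = 0"
proof -
  obtain c where "V y = (\<Sum>a\<in>I. c a *\<^sub>R frame a y)" "\<forall>a\<in>I. s < fst a \<longrightarrow> c a = 0"
    using flag_expansion[OF assms(1-3)] by blast
  then show ?thesis
    using coef_unique[OF assms(1) _ assms(4)] assms(4,5) by simp
qed

lemma coef_eq_0_at_zero: "y \<in> W \<Longrightarrow> V y = 0 \<Longrightarrow> a \<in> I \<Longrightarrow> coef V a y = 0"
  using coef_unique[of y V "\<lambda>_. 0" a] by simp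

lemma smooth_near_coef:
  assumes "smooth_near x V" "a \<in> I"
  shows "smooth_near x (coef V a)"
proof -
  obtain A where "open A" "x \<in> A" "smooth_on A V"
    using assms(1) unfolding smooth_near_def by blast
  let ?A = "A \<inter> W"
  have "open ?A" "x \<in> ?A"
    using \<open>open A\<close> \<open>x \<in> A\<close> open_W x_in_W by auto
  moreover have "\<forall>b\<in>I. smooth_on ?A (frame b)"
    using frame_section unfolding section_on_def by (blast intro: smooth_on_subset)
  moreover have "smooth_on ?A V"
    using \<open>smooth_on A V\<close> by (rule smooth_on_subset) blast
  moreover have "\<forall>y\<in>?A. \<forall>c. (\<Sum>b\<in>I. c b *\<^sub>R frame b y) = 0 \<longrightarrow> (\<forall>b\<in>I. c b = 0)"
    using frame_independent by blast
  moreover have "\<forall>y\<in>?A. \<exists>c. V y = (\<Sum>b\<in>I. c b *\<^sub>R frame b y)"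
  proof
    fix y
    assume "y \<in> ?A"
    then show "\<exists>c. V y = (\<Sum>b\<in>I. c b *\<^sub>R frame b y)"
      by (intro exI[of _ "\<lambda>b. coef V b y"] coef_expansion) simp
  qed
  ultimately have "\<exists>A' c. open A' \<and> x \<in> A' \<and> A' \<subseteq> ?A \<and> (\<forall>b\<in>I. smooth_on A' (c b))
      \<and> (\<forall>y\<in>A'. V y = (\<Sum>b\<in>I. c b y *\<^sub>R frame b y))"
    by (rule smooth_frame_coefficients[OF finite_I])
  then obtain A' c where A': "open A'" "x \<in> A'" "A' \<subseteq> ?A" "\<forall>b\<in>I. smooth_on A' (c b)"
    "\<forall>y\<in>A'. V y = (\<Sum>b\<in>I. c b y *\<^sub>R frame b y)"
    by blast
  have "coef V a y = c a y" if "y \<in> A'" for y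
    using coef_unique[of y V "\<lambda>b. c b y" a] A'(3,5) assms(2) that by blast
  then have "smooth_on A' (coef V a)"
    using smooth_on_cong[OF A'(1), of "coef V a" "c a"] A'(4) assms(2) by blast
  then show ?thesis
    using A'(1,2) unfolding smooth_near_def by blast
qed

(* vanishes_to m g says g \<in> \<mu>^m_{\<Delta>,x}, with an integer index; m \<le> 0 imposes nothing. *)
definition vanishes_to :: "int \<Rightarrow> ('a \<Rightarrow> real) \<Rightarrow> bool" where
  "vanishes_to m g \<longleftrightarrow> (\<forall>Ys. int (length Ys) < m \<and> (\<forall>Y\<in>set Ys. local_section U D x Y)
     \<longrightarrow> foldr lie_deriv Ys g x = 0)"

lemma vanishes_to_nonpos: "m \<le> 0 \<Longrightarrow> vanishes_to m g"
  unfolding vanishes_to_def by auto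

lemma vanishes_to_mono: "vanishes_to m g \<Longrightarrow> m' \<le> m \<Longrightarrow> vanishes_to m' g"
  unfolding vanishes_to_def by auto

lemma vanishes_to_imp_eq_0: "vanishes_to m g \<Longrightarrow> 1 \<le> m \<Longrightarrow> g x = 0"
  unfolding vanishes_to_def by (drule spec[of _ "[]"]) auto

lemma vanishes_to_lie_deriv:
  assumes "vanishes_to m g" "local_section U D x Y"
  shows "vanishes_to (m - 1) (lie_deriv Y g)"
  unfolding vanishes_to_def
proof (intro allI impI)
  fix Ys
  assume "int (length Ys) < m - 1 \<and> (\<forall>Y\<in>set Ys. local_section U D x Y)"
  then have "foldr lie_deriv (Ys @ [Y]) g x = 0"
    using assms(1)[unfolded vanishes_to_def, rule_format, of "Ys @ [Y]"] assms(2) by auto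
  then show "foldr lie_deriv Ys (lie_deriv Y g) x = 0"
    by simp
qed

lemma vanishes_to_succI:
  assumes "g x = 0" "\<And>Y. local_section U D x Y \<Longrightarrow> vanishes_to m (lie_deriv Y g)"
  shows "vanishes_to (m + 1) g"
  unfolding vanishes_to_def
proof (intro allI impI)
  fix Ys
  assume Ys: "int (length Ys) < m + 1 \<and> (\<forall>Y\<in>set Ys. local_section U D x Y)"
  show "foldr lie_deriv Ys g x = 0"
  proof (cases Ys rule: rev_exhaust)
    case Nil
    then show ?thesis
      using assms(1) by simp
  next
    case (snoc Ys' Y)
    then have "foldr lie_deriv Ys' (lie_deriv Y g) x = 0"
      using Ys assms(2)[of Y] unfolding vanishes_to_def by simp
    then show ?thesis
      using snoc by simp
  qed
qed

lemma vanishes_to_cong_ev: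
  assumes "\<forall>\<^sub>F y in nhds x. g' y = g y" "vanishes_to m g"
  shows "vanishes_to m g'"
  unfolding vanishes_to_def
proof (intro allI impI)
  fix Ys
  assume "int (length Ys) < m \<and> (\<forall>Y\<in>set Ys. local_section U D x Y)"
  moreover have "foldr lie_deriv Ys g' x = foldr lie_deriv Ys g x"
    using lie_derivs_cong_ev[OF assms(1)] by (rule eventually_nhds_x_imp_x)
  ultimately show "foldr lie_deriv Ys g' x = 0"
    using assms(2) unfolding vanishes_to_def by simp
qed

lemma vanishes_to_eventually_0: "\<forall>\<^sub>F y in nhds x. g y = 0 \<Longrightarrow> vanishes_to m g"
  by (erule vanishes_to_cong_ev) (simp add: vanishes_to_def lie_derivs_zero)

lemma vanishes_to_lincomb:
  assumes "smooth_near x g" "smooth_near x h" "vanishes_to m g" "vanishes_to m h"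
  shows "vanishes_to m (\<lambda>y. a * g y + b * h y)"
  unfolding vanishes_to_def
proof (intro allI impI)
  fix Ys
  assume Ys: "int (length Ys) < m \<and> (\<forall>Y\<in>set Ys. local_section U D x Y)"
  then have "foldr lie_deriv Ys (\<lambda>y. a * g y + b * h y) x
      = a * foldr lie_deriv Ys g x + b * foldr lie_deriv Ys h x"
    using local_section_imp_smooth_near by (blast intro: lie_derivs_lincomb_near[OF _ assms(1,2)])
  then show "foldr lie_deriv Ys (\<lambda>y. a * g y + b * h y) x = 0"
    using assms(3,4) Ys unfolding vanishes_to_def by simp
qed

lemma vanishes_to_diff:
  assumes "smooth_near x g" "smooth_near x h" "vanishes_to m g" "vanishes_to m h"
  shows "vanishes_to m (\<lambda>y. g y - h y)"
  using vanishes_to_lincomb[OF assms, of 1 "-1"] by simp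

lemma vanishes_to_sum:
  assumes "finite S" "\<forall>i\<in>S. smooth_near x (g i)" "\<forall>i\<in>S. vanishes_to m (g i)"
  shows "vanishes_to m (\<lambda>y. \<Sum>i\<in>S. g i y)"
  using assms
proof (induction S rule: finite_induct)
  case empty
  then show ?case
    by (simp add: vanishes_to_eventually_0)
next
  case (insert i S)
  then show ?case
    using vanishes_to_lincomb[OF _ smooth_near_sum, of "g i" S g m 1 1] by simp
qed

lemma vanishes_to_mult:
  assumes "vanishes_to m g" "smooth_near x g" "smooth_near x h"
  shows "vanishes_to m (\<lambda>y. g y * h y)"
proof (cases "m \<le> 0")
  case True
  then show ?thesis
    by (rule vanishes_to_nonpos)
next
  case False
  then obtain n where "m = int n"
    by (metis nonneg_int_cases linorder_not_le order_less_le)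
  then show ?thesis
    using assms
  proof (induction n arbitrary: m g h)
    case (Suc n)
    have "vanishes_to (int n + 1) (\<lambda>y. g y * h y)"
    proof (rule vanishes_to_succI)
      show "g x * h x = 0"
        using vanishes_to_imp_eq_0[OF Suc.prems(2)] Suc.prems(1) by simp
      fix Y
      assume Y: "local_section U D x Y"
      have Yg: "smooth_near x (lie_deriv Y g)" and Yh: "smooth_near x (lie_deriv Y h)"
        using smooth_near_binop[OF local_section_imp_smooth_near[OF Y] _ smooth_on_lie_deriv]
          Suc.prems(3,4) by blast+
      have "vanishes_to (int n) (lie_deriv Y g)" "vanishes_to (int n) g"
        using vanishes_to_lie_deriv[OF Suc.prems(2) Y] Suc.prems(1,2) vanishes_to_mono by auto
      then have "vanishes_to (int n) (\<lambda>y. lie_deriv Y g y * h y)"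
        "vanishes_to (int n) (\<lambda>y. g y * lie_deriv Y h y)"
        using Suc.IH[OF refl _ Yg Suc.prems(4)] Suc.IH[OF refl _ Suc.prems(3) Yh] by blast+
      then have sum: "vanishes_to (int n)
          (\<lambda>y. 1 * (lie_deriv Y g y * h y) + 1 * (g y * lie_deriv Y h y))"
        by (intro vanishes_to_lincomb smooth_near_binop[OF Yg Suc.prems(4) smooth_on_mult]
            smooth_near_binop[OF Suc.prems(3) Yh smooth_on_mult])
      have "\<forall>\<^sub>F y in nhds x. lie_deriv Y (\<lambda>z. g z * h z) y
          = 1 * (lie_deriv Y g y * h y) + 1 * (g y * lie_deriv Y h y)"
        using smooth_near_eventually_differentiable[OF Suc.prems(3)]
          smooth_near_eventually_differentiable[OF Suc.prems(4)]
        by eventually_elim (simp add: lie_deriv_mult)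
      then show "vanishes_to (int n) (lie_deriv Y (\<lambda>y. g y * h y))"
        using sum by (rule vanishes_to_cong_ev)
    qed
    then show ?case
      using Suc.prems(1) by (simp add: add.commute)
  qed (simp add: vanishes_to_nonpos)
qed

(* The part of c_b([V, Y]) that does not differentiate the coefficients of V. *)
definition bracket_term :: "('a \<Rightarrow> 'a) \<Rightarrow> ('a \<Rightarrow> 'a) \<Rightarrow> nat \<times> nat \<Rightarrow> 'a \<Rightarrow> real" where
  "bracket_term V Y b y = (\<Sum>a\<in>I. coef V a y * coef (lie_bracket (frame a) Y) b y)"

lemma coef_lie_bracket_at:
  assumes "y \<in> W" "\<forall>a\<in>I. coef V a differentiable (at y)" "Y differentiable (at y)" "b \<in> I"
  shows "coef (lie_bracket V Y) b y = bracket_term V Y b y - lie_deriv Y (coef V b) y"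
proof -
  let ?h = "\<lambda>a. coef (lie_bracket (frame a) Y)"
  have "\<forall>a\<in>I. frame a differentiable (at y)"
    using frame_section assms(1) unfolding section_on_def by (blast intro: smooth_on_imp_differentiable)
  then have "lie_bracket V Y y = (\<Sum>a\<in>I. coef V a y *\<^sub>R lie_bracket (frame a) Y y)
      - (\<Sum>a\<in>I. lie_deriv Y (coef V a) y *\<^sub>R frame a y)"
    using assms(2,3) coef_expansion
    by (intro lie_bracket_expansion[OF open_W assms(1) finite_I]) auto
  also have "(\<Sum>a\<in>I. coef V a y *\<^sub>R lie_bracket (frame a) Y y)
      = (\<Sum>a\<in>I. coef V a y *\<^sub>R (\<Sum>c\<in>I. ?h a c y *\<^sub>R frame c y))"
    using coef_expansion[OF assms(1)] by simp
  also have "\<dots> = (\<Sum>c\<in>I. bracket_term V Y c y *\<^sub>R frame c y)"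
    unfolding bracket_term_def scaleR_sum_right scaleR_sum_left scaleR_scaleR
    by (rule sum.swap)
  finally have "lie_bracket V Y y
      = (\<Sum>c\<in>I. (bracket_term V Y c y - lie_deriv Y (coef V c) y) *\<^sub>R frame c y)"
    by (simp add: scaleR_diff_left sum_subtractf)
  then show ?thesis
    by (rule coef_unique[OF assms(1) _ assms(4)])
qed

lemma coef_lie_bracket:
  assumes "smooth_near x V" "local_section U D x Y" "b \<in> I"
  shows "\<forall>\<^sub>F y in nhds x. coef (lie_bracket V Y) b y = bracket_term V Y b y - lie_deriv Y (coef V b) y"
proof -
  have "\<forall>\<^sub>F y in nhds x. \<forall>a\<in>I. coef V a differentiable (at y)"
    using smooth_near_eventually_differentiable[OF smooth_near_coef[OF assms(1)]]
    by (simp add: eventually_ball_finite finite_I)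
  moreover have "\<forall>\<^sub>F y in nhds x. Y differentiable (at y)"
    by (rule smooth_near_eventually_differentiable[OF local_section_imp_smooth_near[OF assms(2)]])
  moreover have "\<forall>\<^sub>F y in nhds x. y \<in> W"
    by (rule eventually_nhds_in_open[OF open_W x_in_W])
  ultimately show ?thesis
    by eventually_elim (rule coef_lie_bracket_at[OF _ _ _ assms(3)])
qed

lemma smooth_near_bracket_term:
  assumes "smooth_near x V" "local_section U D x Y" "b \<in> I"
  shows "smooth_near x (bracket_term V Y b)"
proof -
  have "smooth_near x (\<lambda>y. coef V a y * coef (lie_bracket (frame a) Y) b y)" if "a \<in> I" for a
  proof (rule smooth_near_binop[OF smooth_near_coef[OF assms(1) that] _ smooth_on_mult])
    show "smooth_near x (coef (lie_bracket (frame a) Y) b)"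
      using smooth_near_binop[OF smooth_near_frame[OF that] local_section_imp_smooth_near[OF assms(2)]
          smooth_on_lie_bracket] by (rule smooth_near_coef[OF _ assms(3)])
  qed
  then show ?thesis
    unfolding bracket_term_def by (intro smooth_near_sum finite_I) blast
qed

lemma coef_section_eq_0:
  assumes "local_section U D x Y" "b \<in> I" "1 < fst b"
  shows "\<forall>\<^sub>F y in nhds x. coef Y b y = 0"
proof -
  obtain V where "x \<in> V" "section_on U D V Y"
    using assms(1) unfolding local_section_def by blast
  then have "\<forall>y\<in>V \<inter> W. coef Y b y = 0"
    using coef_eq_0_above_flag[of _ 1 Y b] assms(2,3) unfolding section_on_def by auto
  moreover have "open (V \<inter> W)" "x \<in> V \<inter> W"
    using \<open>x \<in> V\<close> \<open>section_on U D V Y\<close> open_W x_in_W unfolding section_on_def by auto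
  ultimately show ?thesis
    unfolding eventually_nhds by blast
qed

(* The bracket of a section of \<Delta>_s with a section of \<Delta> lies in \<Delta>_(s+1). *)
lemma coef_lie_bracket_frame_eq_0:
  assumes "local_section U D x Y" "a \<in> I" "b \<in> I" "fst a + 1 < fst b"
  shows "\<forall>\<^sub>F y in nhds x. coef (lie_bracket (frame a) Y) b y = 0"
proof -
  obtain V where "x \<in> V" "section_on U D V Y"
    using assms(1) unfolding local_section_def by blast
  define A where "A = V \<inter> W"
  have A: "open A" "x \<in> A" "A \<subseteq> V" "A \<subseteq> W"
    using \<open>x \<in> V\<close> \<open>section_on U D V Y\<close> open_W x_in_W
    unfolding A_def section_on_def by auto
  obtain s where s: "fst a = Suc s"
    using assms(2) mem_I_iff by (cases "fst a") auto
  have Y: "section_on U D A Y" and Za: "section_on U (flag U D (Suc s)) A (frame a)"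
    using \<open>section_on U D V Y\<close> frame_section[OF assms(2)] A s
    unfolding section_on_def by (auto intro: smooth_on_subset)
  have "coef (lie_bracket (frame a) Y) b y = 0" if "y \<in> A" for y
  proof -
    have "lie_bracket Y (frame a) y \<in> {lie_bracket Y' Z' y | Y' Z'.
        \<exists>V. y \<in> V \<and> section_on U D V Y' \<and> section_on U (flag U D (Suc s)) V Z'}"
      using that Y Za by blast
    then have "- lie_bracket Y (frame a) y \<in> flag U D (Suc (Suc s)) y"
      unfolding flag.simps by (intro span_neg span_base) blast
    moreover have "lie_bracket (frame a) Y y = - lie_bracket Y (frame a) y"
      by (simp add: lie_bracket_def)
    ultimately have "lie_bracket (frame a) Y y \<in> flag U D (Suc (Suc s)) y"
      by simp
    then show ?thesis
      using coef_eq_0_above_flag[of y "Suc (Suc s)" "lie_bracket (frame a) Y" b] that A(4) assms(3,4) s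
      by auto
  qed
  then show ?thesis
    using A(1,2) unfolding eventually_nhds by blast
qed

lemma vanishes_to_bracket_term:
  assumes "smooth_near x V" "local_section U D x Y" "b \<in> I"
    and "\<And>a. a \<in> I \<Longrightarrow> fst b \<le> fst a + 1 \<Longrightarrow> vanishes_to m (coef V a)"
  shows "vanishes_to m (bracket_term V Y b)"
  unfolding bracket_term_def
proof (rule vanishes_to_sum[OF finite_I]; intro ballI)
  fix a
  assume "a \<in> I"
  have h: "smooth_near x (coef (lie_bracket (frame a) Y) b)"
    using smooth_near_binop[OF smooth_near_frame[OF \<open>a \<in> I\<close>] local_section_imp_smooth_near[OF assms(2)]
        smooth_on_lie_bracket] by (rule smooth_near_coef[OF _ assms(3)])
  show "smooth_near x (\<lambda>y. coef V a y * coef (lie_bracket (frame a) Y) b y)"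
    by (rule smooth_near_binop[OF smooth_near_coef[OF assms(1) \<open>a \<in> I\<close>] h smooth_on_mult])
  show "vanishes_to m (\<lambda>y. coef V a y * coef (lie_bracket (frame a) Y) b y)"
  proof (cases "fst a + 1 < fst b")
    case True
    then show ?thesis
      using coef_lie_bracket_frame_eq_0[OF assms(2) \<open>a \<in> I\<close> assms(3)]
      by (intro vanishes_to_eventually_0) (auto elim: eventually_mono)
  next
    case False
    then show ?thesis
      using assms(4)[OF \<open>a \<in> I\<close>] smooth_near_coef[OF assms(1) \<open>a \<in> I\<close>] h
      by (intro vanishes_to_mult) auto
  qed
qed

definition weight_ge :: "int \<Rightarrow> ('a \<Rightarrow> 'a) \<Rightarrow> bool" where
  "weight_ge w V \<longleftrightarrow> smooth_near x V \<and> (\<forall>a\<in>I. vanishes_to (w + int (fst a)) (coef V a))"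

lemma weight_ge_lie_bracket:
  assumes "weight_ge w V" "local_section U D x Y"
  shows "weight_ge (w - 1) (lie_bracket V Y)"
proof -
  have V: "smooth_near x V"
    using assms(1) by (simp add: weight_ge_def)
  have "vanishes_to (w - 1 + int (fst b)) (coef (lie_bracket V Y) b)" if "b \<in> I" for b
  proof (rule vanishes_to_cong_ev[OF coef_lie_bracket[OF V assms(2) that]])
    have coef_V: "vanishes_to (w + int (fst a)) (coef V a)" if "a \<in> I" for a
      using assms(1) that unfolding weight_ge_def by blast
    have "vanishes_to (w - 1 + int (fst b)) (bracket_term V Y b)"
    proof (rule vanishes_to_bracket_term[OF V assms(2) that])
      fix a
      assume "a \<in> I" "fst b \<le> fst a + 1"
      then show "vanishes_to (w - 1 + int (fst b)) (coef V a)"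
        by (intro vanishes_to_mono[OF coef_V]) auto
    qed
    moreover have "vanishes_to (w - 1 + int (fst b)) (lie_deriv Y (coef V b))"
      using vanishes_to_lie_deriv[OF coef_V[OF that] assms(2)] by (simp add: algebra_simps)
    ultimately show "vanishes_to (w - 1 + int (fst b))
        (\<lambda>y. bracket_term V Y b y - lie_deriv Y (coef V b) y)"
      using smooth_near_bracket_term[OF V assms(2) that]
        smooth_near_binop[OF local_section_imp_smooth_near[OF assms(2)] smooth_near_coef[OF V that]
          smooth_on_lie_deriv]
      by (intro vanishes_to_diff)
  qed
  moreover have "smooth_near x (lie_bracket V Y)"
    by (rule smooth_near_binop[OF V local_section_imp_smooth_near[OF assms(2)] smooth_on_lie_bracket])
  ultimately show ?thesis
    unfolding weight_ge_def by blast
qed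

lemma weight_ge_lie_brackets:
  "weight_ge w V \<Longrightarrow> \<forall>Y\<in>set Ys. local_section U D x Y
    \<Longrightarrow> weight_ge (w - int (length Ys)) (foldl lie_bracket V Ys)"
proof (induction Ys arbitrary: V w)
  case (Cons Y Ys)
  then have "weight_ge (w - 1 - int (length Ys)) (foldl lie_bracket (lie_bracket V Y) Ys)"
    using weight_ge_lie_bracket by simp
  then show ?case
    by (simp add: algebra_simps)
qed simp

lemma weight_ge_coef_eq_0: "weight_ge w V \<Longrightarrow> b \<in> I \<Longrightarrow> 1 \<le> w + int (fst b) \<Longrightarrow> coef V b x = 0"
  unfolding weight_ge_def using vanishes_to_imp_eq_0 by blast

(* Converse of weight_ge_lie_brackets: Y c_b(V) = bracket_term V Y b - c_b([V, Y]) trades one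
   derivative of a coefficient for one more bracket. *)
lemma vanishes_to_coef_if_bracket_coefs_vanish:
  assumes "smooth_near x V" "b \<in> I"
    and "\<And>Ys b. length Ys \<le> n \<Longrightarrow> \<forall>Y\<in>set Ys. local_section U D x Y \<Longrightarrow> b \<in> I \<Longrightarrow>
      int (length Ys) - w < int (fst b) \<Longrightarrow> coef (foldl lie_bracket V Ys) b x = 0"
  shows "vanishes_to (min (int n + 1) (w + int (fst b))) (coef V b)"
  using assms
proof (induction n arbitrary: V w b rule: less_induct)
  case (less n)
  let ?m = "min (int n) (w - 1 + int (fst b))"
  show ?case
  proof (cases "w + int (fst b) \<le> 0")
    case True
    then show ?thesis
      by (intro vanishes_to_nonpos) simp
  next
    case False
    have "vanishes_to (?m + 1) (coef V b)"
    proof (rule vanishes_to_succI)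
      show "coef V b x = 0"
        using less.prems(3)[of "[]" b] less.prems(2) False by simp
      fix Y
      assume Y: "local_section U D x Y"
      show "vanishes_to ?m (lie_deriv Y (coef V b))"
      proof (cases n)
        case 0
        then show ?thesis
          by (intro vanishes_to_nonpos) simp
      next
        case (Suc n')
        have VY: "smooth_near x (lie_bracket V Y)"
          by (rule smooth_near_binop[OF less.prems(1) local_section_imp_smooth_near[OF Y]
                smooth_on_lie_bracket])
        have "vanishes_to ?m (bracket_term V Y b)"
        proof (rule vanishes_to_bracket_term[OF less.prems(1) Y less.prems(2)])
          fix a
          assume "a \<in> I" "fst b \<le> fst a + 1"
          have "vanishes_to (min (int n' + 1) (w + int (fst a))) (coef V a)"
            using less.prems(3) Suc by (intro less.IH[OF _ less.prems(1) \<open>a \<in> I\<close>]) auto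
          moreover have "?m \<le> min (int n' + 1) (w + int (fst a))"
            using \<open>fst b \<le> fst a + 1\<close> Suc by linarith
          ultimately show "vanishes_to ?m (coef V a)"
            by (rule vanishes_to_mono)
        qed
        moreover have "vanishes_to (min (int n' + 1) (w - 1 + int (fst b))) (coef (lie_bracket V Y) b)"
        proof (rule less.IH[OF _ VY less.prems(2)])
          fix Zs b'
          assume "length Zs \<le> n'" "\<forall>Y\<in>set Zs. local_section U D x Y" "b' \<in> I"
            "int (length Zs) - (w - 1) < int (fst b')"
          then show "coef (foldl lie_bracket (lie_bracket V Y) Zs) b' x = 0"
            using less.prems(3)[of "Y # Zs" b'] Y Suc by simp
        qed (use Suc in simp)
        then have "vanishes_to ?m (coef (lie_bracket V Y) b)"
          using Suc by (simp add: add.commute)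
        ultimately have diff: "vanishes_to ?m (\<lambda>y. bracket_term V Y b y - coef (lie_bracket V Y) b y)"
          using smooth_near_bracket_term[OF less.prems(1) Y less.prems(2)]
            smooth_near_coef[OF VY less.prems(2)]
          by (intro vanishes_to_diff)
        have "\<forall>\<^sub>F y in nhds x. lie_deriv Y (coef V b) y
            = bracket_term V Y b y - coef (lie_bracket V Y) b y"
          using coef_lie_bracket[OF less.prems(1) Y less.prems(2)] by eventually_elim simp
        then show ?thesis
          using diff by (rule vanishes_to_cong_ev)
      qed
    qed
    moreover have "?m + 1 = min (int n + 1) (w + int (fst b))"
      by linarith
    ultimately show ?thesis
      by simp
  qed
qed

lemma Lfilt_bracket_weight_ge:
  assumes "Lfilt U D x i X" "local_section U D x Y"
  shows "weight_ge (int i - 1) (lie_bracket X Y)"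
proof -
  have sec: "local_section U D x (lie_bracket X Y)"
    using Lfilt_imp_Lx[OF assms(1)] assms(2) unfolding Lx_def by blast
  then have smooth: "smooth_near x (lie_bracket X Y)"
    by (rule local_section_imp_smooth_near)
  have "vanishes_to (int i - 1 + int (fst a)) (coef (lie_bracket X Y) a)" if "a \<in> I" for a
  proof (cases "1 < fst a")
    case True
    then show ?thesis
      using coef_section_eq_0[OF sec that] by (blast intro: vanishes_to_eventually_0)
  next
    case False
    then have "fst a = 1"
      using that mem_I_iff by simp
    show ?thesis
    proof (cases "i = 0")
      case True
      then show ?thesis
        using \<open>fst a = 1\<close> by (simp add: vanishes_to_nonpos)
    next
      case False
      have "vanishes_to (min (int (i - 1) + 1) (int i - 1 + int (fst a))) (coef (lie_bracket X Y) a)"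
      proof (rule vanishes_to_coef_if_bracket_coefs_vanish[OF smooth that])
        fix Zs b
        assume "length Zs \<le> i - 1" "\<forall>Y\<in>set Zs. local_section U D x Y" "b \<in> I"
        then have "length (Y # Zs) \<le> i" "\<forall>Y\<in>set (Y # Zs). local_section U D x Y"
          using assms(2) False by auto
        then have "foldl lie_bracket X (Y # Zs) x = 0"
          by (rule Lfilt_brackets_eq_0[OF assms(1)])
        then show "coef (foldl lie_bracket (lie_bracket X Y) Zs) b x = 0"
          using coef_eq_0_at_zero[OF x_in_W _ \<open>b \<in> I\<close>] by simp
      qed
      then show ?thesis
        using False \<open>fst a = 1\<close> by simp
    qed
  qed
  then show ?thesis
    unfolding weight_ge_def using smooth by blast
qed

lemma Lfilt_bracket_coefs_eq_0:
  assumes "Lfilt U D x i X" "\<forall>Y\<in>set Ys. local_section U D x Y" "b \<in> I"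
    and "int (length Ys) - int i < int (fst b)"
  shows "coef (foldl lie_bracket X Ys) b x = 0"
proof (cases "length Ys \<le> i")
  case True
  then show ?thesis
    using Lfilt_brackets_eq_0[OF assms(1) True assms(2)] coef_eq_0_at_zero[OF x_in_W _ assms(3)] by blast
next
  case False
  then obtain Y Ys' where Ys: "Ys = Y # Ys'"
    by (cases Ys) auto
  have "weight_ge (int i - 1 - int (length Ys')) (foldl lie_bracket (lie_bracket X Y) Ys')"
    using assms(2) Ys by (intro weight_ge_lie_brackets Lfilt_bracket_weight_ge[OF assms(1)]) auto
  then show ?thesis
    using weight_ge_coef_eq_0[OF _ assms(3)] assms(4) Ys by simp
qed

lemma Lfilt_coef_vanishes:
  assumes "Lfilt U D x i X" "b \<in> I"
  shows "vanishes_to (int i + int (fst b)) (coef X b)"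
proof -
  have "smooth_near x X"
    using Lfilt_imp_Lx[OF assms(1)] unfolding Lx_def smooth_near_def by blast
  then have "vanishes_to (min (int (i + fst b) + 1) (int i + int (fst b))) (coef X b)"
    using Lfilt_bracket_coefs_eq_0[OF assms(1)] by (rule vanishes_to_coef_if_bracket_coefs_vanish[OF _ assms(2)])
  then show ?thesis
    by simp
qed

end

theorem lemma1:
  fixes U :: "'a::euclidean_space set" and D :: "'a \<Rightarrow> 'a set" and x :: 'a
    and \<kappa> :: nat and r :: "nat \<Rightarrow> nat" and Z :: "nat \<Rightarrow> nat \<Rightarrow> 'a \<Rightarrow> 'a"
    and W :: "'a set" and X :: "'a \<Rightarrow> 'a" and f :: "nat \<Rightarrow> nat \<Rightarrow> 'a \<Rightarrow> real" and i :: nat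
  assumes distr: "smooth_distribution U D"
    and reg: "regular U D"
    and x_in: "x \<in> U"
    and kappa: "\<forall>y\<in>U. flag U D \<kappa> y = UNIV"
    and kappa_least: "\<forall>k<\<kappa>. \<not> (\<forall>y\<in>U. flag U D k y = UNIV)"
    and W: "open W" "x \<in> W" "W \<subseteq> U"
    and Z_sec: "\<forall>j l. 1 \<le> j \<and> j \<le> \<kappa> \<and> l < r j \<longrightarrow> section_on U (flag U D j) W (Z j l)"
    and Z_frame: "\<forall>s\<ge>1. \<forall>y\<in>W.
        inj_on (\<lambda>(t, l). Z t l y) (frame_idx r \<kappa> s) \<and>
        independent ((\<lambda>(t, l). Z t l y) ` frame_idx r \<kappa> s) \<and>
        span ((\<lambda>(t, l). Z t l y) ` frame_idx r \<kappa> s) = flag U D s y"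
    and X_filt: "Lfilt U D x i X"
    and X_expand: "\<forall>y\<in>W. X y = (\<Sum>(j, l)\<in>frame_idx r \<kappa> \<kappa>. f j l y *\<^sub>R Z j l y)"
  shows "\<forall>j l. 1 \<le> j \<and> j \<le> \<kappa> \<and> l < r j \<longrightarrow> mu U D x (i + j) (f j l)"
proof (intro allI impI)
  interpret adapted_frame U D x \<kappa> r Z W
    using W kappa Z_sec Z_frame by unfold_locales
  fix j l
  assume "1 \<le> j \<and> j \<le> \<kappa> \<and> l < r j"
  then have a: "(j, l) \<in> I"
    by (simp add: mem_I_iff)
  have f_eq: "\<forall>y\<in>W. f j l y = coef X (j, l) y"
    using coef_unique[OF _ _ a] X_expand unfolding I_def frame_def by (simp add: case_prod_beta')
  then have near: "\<forall>\<^sub>F y in nhds x. f j l y = coef X (j, l) y"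
    using W(1,2) unfolding eventually_nhds by blast
  have "vanishes_to (int (i + j)) (f j l)"
    using vanishes_to_cong_ev[OF near Lfilt_coef_vanishes[OF X_filt a]] by simp
  moreover obtain V where "open V" "x \<in> V" "smooth_on V (f j l)"
    using smooth_near_cong_ev[OF near smooth_near_coef[OF _ a]] Lfilt_imp_Lx[OF X_filt]
    unfolding Lx_def smooth_near_def by blast
  ultimately show "mu U D x (i + j) (f j l)"
    unfolding mu_def vanishes_to_def using W
    by (intro conjI exI[of _ "V \<inter> W"]) (auto intro: smooth_on_subset)
qed

end
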